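(* Let $\alpha\in[0,n)$ and $T>0$. There is $C>0$ (depending on $n,\alpha,T$) such that $t^\alpha P_t(x)\le C\,\mathscr{J}_\alpha(P_t)(x)$ for all $x\in\mathbb{R}^n$ and $0<t\le T$. Consequently, for every $p\in[1,\infty]$ and nonnegative $g\in L^p(\mathbb{R}^n)$, $t^\alpha(P_t*g)(x)\le C\,(P_t*\mathscr{J}_\alpha g)(x)$ for all $x\in\mathbb{R}^n$ and $0<t\le T$.
   Context: $P_t(x)=\frac{c_nt}{(t^2+|x|^2)^{(n+1)/2}}$ is the Poisson kernel on $\mathbb{R}^n$ ($c_n$ normalising $\int P_t=1$). $\mathscr{J}_\alpha g=G_\alpha*g$ for $\alpha>0$, where $\widehat{G_\alpha}(\xi)=(1+4\pi^2|\xi|^2)^{-\alpha/2}$, and $\mathscr{J}_0$ is the identity. *)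

theory Defs
  imports "HOL-Analysis.Analysis"
begin

definition fourier :: "('a::euclidean_space \<Rightarrow> real) \<Rightarrow> 'a \<Rightarrow> complex" where
  "fourier f \<xi> = (LINT x|lborel. complex_of_real (f x) * cis (- 2 * pi * (x \<bullet> \<xi>)))"

text \<open>Bessel kernel \<open>G_\<alpha>\<close> (\<alpha> > 0): the integrable function whose Fourier transform is
  \<open>(1 + 4\<pi>^2 |\<xi>|^2)^{-\<alpha>/2}\<close> (determined up to a null set, which does not affect convolutions).\<close>
definition bessel_kernel :: "real \<Rightarrow> 'a::euclidean_space \<Rightarrow> real" where
  "bessel_kernel \<alpha> = (SOME G. G \<in> borel_measurable lborel \<and> integrable lborel G \<and>
      (\<forall>\<xi>. fourier G \<xi> = complex_of_real ((1 + 4 * pi\<^sup>2 * (norm \<xi>)\<^sup>2) powr (- \<alpha> / 2))))"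

definition conv :: "('a::euclidean_space \<Rightarrow> real) \<Rightarrow> ('a \<Rightarrow> real) \<Rightarrow> 'a \<Rightarrow> real" where
  "conv f g x = (LINT y|lborel. f y * g (x - y))"

definition bessel_pot :: "real \<Rightarrow> ('a::euclidean_space \<Rightarrow> real) \<Rightarrow> 'a \<Rightarrow> real" where
  "bessel_pot \<alpha> g = (if \<alpha> = 0 then g else conv (bessel_kernel \<alpha>) g)"

definition poisson_shape :: "real \<Rightarrow> 'a::euclidean_space \<Rightarrow> real" where
  "poisson_shape t x = t / (t\<^sup>2 + (norm x)\<^sup>2) powr ((real DIM('a) + 1) / 2)"

definition poisson_const :: "'a::euclidean_space itself \<Rightarrow> real" where
  "poisson_const _ = inverse (LINT x|lborel. poisson_shape 1 (x::'a))"

definition poisson :: "real \<Rightarrow> 'a::euclidean_space \<Rightarrow> real" where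
  "poisson t x = poisson_const TYPE('a) * poisson_shape t x"

end

theory Submission
  imports Defs "HOL-Probability.Probability"
begin

text \<open>
  For \<open>0 < \<alpha>\<close> the Bessel kernel is a superposition of heat kernels (Bochner subordination):
  \<open>G_\<alpha>(y) = \<integral>\<^sub>0\<^sup>\<infinity> u^(\<alpha>/2 - 1) e^(-u) / \<Gamma>(\<alpha>/2) (4\<pi>u)^(-n/2) e^(-|y|^2/4u) du\<close>, since
  \<open>(1 + 4\<pi>^2|\<xi>|^2)^(-\<alpha>/2)\<close> is the corresponding Gamma integral of the Fourier transforms
  \<open>e^(-4\<pi>^2 u |\<xi>|^2)\<close> of the heat kernels. Keeping only \<open>u \<in> [t^2, 2t^2]\<close> gives
  \<open>G_\<alpha>(y) \<ge> c t^(\<alpha> - n)\<close> for \<open>|y| \<le> t \<le> T\<close>, and for such \<open>y\<close> also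
  \<open>P_t(x - y) \<ge> 3^(-(n+1)/2) P_t(x)\<close>; integrating over the ball of radius \<open>t\<close> yields
  \<open>(G_\<alpha> * P_t)(x) \<ge> c' t^\<alpha> P_t(x)\<close>. The kernel \<^const>\<open>bessel_kernel\<close> is only specified
  through its Fourier transform, so one also needs that integrable kernels with equal Fourier transforms
  have equal convolutions with \<open>P_t\<close>: \<open>P_t\<close> is a Gamma average of Gaussians, and against a
  Gaussian this follows from Gaussian Fourier inversion and Fubini.

  The estimate for \<open>g\<close> follows from \<open>P_t * (G_\<alpha> * g) = (G_\<alpha> * P_t) * g\<close>; Fubini applies
  because \<open>P_t\<close> is bounded and integrable and \<open>g\<close> lies in some \<open>L^p\<close> or in \<open>L^\<infinity>\<close>.
\<close>

section \<open>Gamma weights and Gaussian integrals\<close>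

lemma borel_measurable_cis [measurable]:
  assumes "f \<in> borel_measurable M"
  shows "(\<lambda>x. cis (f x)) \<in> borel_measurable M"
proof -
  have "cis \<in> borel_measurable borel"
    by (rule borel_measurable_continuous_onI) (simp add: cis_conv_exp continuous_intros)
  from measurable_compose[OF assms this] show ?thesis by (simp add: o_def)
qed

definition gamma_weight :: "real \<Rightarrow> real \<Rightarrow> real \<Rightarrow> real" where
  "gamma_weight s l u = indicator {0<..} u * u powr (s - 1) * exp (- l * u)"

lemma gamma_weight_nonneg: "0 \<le> gamma_weight s l u"
  by (simp add: gamma_weight_def)

lemma borel_measurable_gamma_weight [measurable]: "gamma_weight s l \<in> borel_measurable borel"
  unfolding gamma_weight_def[abs_def] by measurable

lemma gamma_weight_mult_exp: "gamma_weight s l u * exp (- m * u) = gamma_weight s (l + m) u"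
  by (simp add: gamma_weight_def mult.assoc flip: exp_add) (simp add: algebra_simps)

lemma nn_integral_gamma_weight:
  assumes s: "s > 0" and l: "l > 0"
  shows "(\<integral>\<^sup>+u. gamma_weight s l u \<partial>lborel) = ennreal (Gamma s / l powr s)"
proof -
  define f where "f v = ennreal (indicator {0..} v * v powr (s - 1) / exp v)" for v :: real
  have [measurable]: "f \<in> borel_measurable borel"
    unfolding f_def by measurable
  have rescale: "f (l * u) = ennreal (l powr (s - 1)) * gamma_weight s l u" for u
  proof (cases "u > 0")
    case True
    then show ?thesis using l
      by (simp add: f_def gamma_weight_def ennreal_mult'[symmetric] powr_mult exp_minus field_simps)
  next
    case False
    with l have "l * u \<le> 0" by (simp add: mult_nonneg_nonpos)
    with False show ?thesis
      by (cases "u = 0") (auto simp: f_def gamma_weight_def)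
  qed
  have "ennreal (Gamma s) = (\<integral>\<^sup>+v. f v \<partial>lborel)"
    using Gamma_conv_nn_integral_real[OF s] by (simp add: f_def)
  also have "\<dots> = ennreal l * (\<integral>\<^sup>+u. f (0 + l * u) \<partial>lborel)"
    using l by (subst nn_integral_real_affine[of f l 0]) auto
  also have "\<dots> = ennreal l * (\<integral>\<^sup>+u. ennreal (l powr (s - 1)) * gamma_weight s l u \<partial>lborel)"
    by (simp add: rescale)
  also have "\<dots> = ennreal (l * l powr (s - 1)) * (\<integral>\<^sup>+u. gamma_weight s l u \<partial>lborel)"
    using l by (simp add: nn_integral_cmult ennreal_mult' mult.assoc)
  also have "l * l powr (s - 1) = l powr s"
    using l by (simp add: powr_diff)
  finally have Gamma_eq: "ennreal (Gamma s) = (\<integral>\<^sup>+u. gamma_weight s l u \<partial>lborel) * ennreal (l powr s)"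
    by (simp add: mult.commute)
  have "ennreal (Gamma s / l powr s) = ennreal (Gamma s) / ennreal (l powr s)"
    using l s by (simp add: divide_ennreal less_imp_le)
  also have "\<dots> = (\<integral>\<^sup>+u. gamma_weight s l u \<partial>lborel)"
    unfolding Gamma_eq using l by (intro ennreal_mult_divide_eq) auto
  finally show ?thesis ..
qed

lemma has_bochner_integral_gamma_weight:
  assumes "s > 0" "l > 0"
  shows "has_bochner_integral lborel (gamma_weight s l) (Gamma s / l powr s)"
  using assms by (intro has_bochner_integral_nn_integral nn_integral_gamma_weight)
    (auto simp: gamma_weight_nonneg less_imp_le)

lemma integrable_gamma_weight: "s > 0 \<Longrightarrow> l > 0 \<Longrightarrow> integrable lborel (gamma_weight s l)"
  using has_bochner_integral_gamma_weight by (auto simp: has_bochner_integral_iff)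

lemma integral_gamma_weight:
  "s > 0 \<Longrightarrow> l > 0 \<Longrightarrow> (LINT u|lborel. gamma_weight s l u) = Gamma s / l powr s"
  using has_bochner_integral_gamma_weight by (auto simp: has_bochner_integral_iff)

lemma integrable_gaussian_real:
  assumes "a > 0"
  shows "integrable lborel (\<lambda>x::real. exp (- a * x\<^sup>2))"
proof -
  have "integrable lborel (\<lambda>x. sqrt (2 * pi) * std_normal_density (0 + sqrt (2 * a) * x))"
    using lborel_integrable_real_affine[OF integrable_normal_density[of 1 0], of "sqrt (2 * a)" 0] assms
    by simp
  then show ?thesis
    using assms by (simp add: std_normal_density_def power_mult_distrib)
qed

lemma gaussian_fourier_real:
  fixes a s :: real
  assumes a: "a > 0"
  shows "(CLINT x|lborel. complex_of_real (exp (- a * x\<^sup>2)) * cis (x * s)) =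
    complex_of_real (sqrt (pi / a) * exp (- s\<^sup>2 / (4 * a)))"
proof -
  define c where "c = sqrt (2 * a)"
  have c: "c > 0" "c\<^sup>2 = 2 * a"
    using a by (auto simp: c_def)
  have density: "std_normal_density (c * y) = (1 / sqrt (2 * pi)) * exp (- a * y\<^sup>2)" for y
    using c by (simp add: std_normal_density_def power_mult_distrib)
  have "complex_of_real (exp (- ((s / c)\<^sup>2) / 2)) = char std_normal_distribution (s / c)"
    by (simp add: char_std_normal_distribution)
  also have "\<dots> = (CLINT x|lborel. std_normal_density x *\<^sub>R iexp (s / c * x))"
    unfolding char_def by (subst integral_density) auto
  also have "\<dots> = c *\<^sub>R (CLINT y|lborel. std_normal_density (0 + c * y) *\<^sub>R iexp (s / c * (0 + c * y)))"
    using lborel_integral_real_affine[of c "\<lambda>x. std_normal_density x *\<^sub>R iexp (s / c * x)" 0] c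
    by simp
  also have "(\<lambda>y. std_normal_density (0 + c * y) *\<^sub>R iexp (s / c * (0 + c * y))) =
      (\<lambda>y. complex_of_real (1 / sqrt (2 * pi)) * (complex_of_real (exp (- a * y\<^sup>2)) * cis (y * s)))"
  proof
    fix y
    show "std_normal_density (0 + c * y) *\<^sub>R iexp (s / c * (0 + c * y)) =
      complex_of_real (1 / sqrt (2 * pi)) * (complex_of_real (exp (- a * y\<^sup>2)) * cis (y * s))"
      using c density[of y] by (simp add: cis_conv_exp scaleR_conv_of_real mult_ac)
  qed
  finally have "(CLINT y|lborel. complex_of_real (exp (- a * y\<^sup>2)) * cis (y * s)) =
      complex_of_real (sqrt (2 * pi) / c * exp (- ((s / c)\<^sup>2) / 2))"
    using c by (simp add: scaleR_conv_of_real field_simps)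
  also have "sqrt (2 * pi) / c * exp (- ((s / c)\<^sup>2) / 2) = sqrt (pi / a) * exp (- s\<^sup>2 / (4 * a))"
    using c a by (simp add: c_def power_divide real_sqrt_divide real_sqrt_mult field_simps)
  finally show ?thesis .
qed

lemma norm_power2_eq_sum_Basis: "(norm x)\<^sup>2 = (\<Sum>b\<in>Basis. (x \<bullet> b)\<^sup>2)"
proof -
  have "(norm x)\<^sup>2 = x \<bullet> x"
    by (rule power2_norm_eq_inner)
  also have "\<dots> = (\<Sum>b\<in>Basis. (x \<bullet> b) * (x \<bullet> b))"
    by (rule euclidean_inner)
  finally show ?thesis
    by (simp add: power2_eq_square)
qed

lemma integrable_gaussian:
  assumes a: "a > 0"
  shows "integrable lborel (\<lambda>x::'a::euclidean_space. exp (- a * (norm x)\<^sup>2))"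
proof (rule integrableI_nonneg)
  have "(\<integral>\<^sup>+x. exp (- a * (norm (x::'a))\<^sup>2) \<partial>lborel) =
        (\<integral>\<^sup>+x. (\<Prod>b\<in>Basis. ennreal (exp (- a * (x \<bullet> b)\<^sup>2))) \<partial>(lborel::'a measure))"
    by (intro nn_integral_cong)
      (simp add: norm_power2_eq_sum_Basis sum_distrib_left exp_sum prod_ennreal)
  also have "\<dots> = (\<Prod>b\<in>(Basis::'a set). (\<integral>\<^sup>+x. ennreal (exp (- a * x\<^sup>2)) \<partial>lborel))"
    by (rule nn_integral_lborel_prod) auto
  also have "\<dots> < \<infinity>"
    using integrable_gaussian_real[OF a]
    by (simp add: integrable_iff_bounded power_less_top_ennreal)
  finally show "(\<integral>\<^sup>+x. exp (- a * (norm (x::'a))\<^sup>2) \<partial>lborel) < \<infinity>" .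
qed auto

lemma integral_lborel_prod:
  fixes f :: "'a::euclidean_space \<Rightarrow> real \<Rightarrow> 'b::{real_normed_field, banach, second_countable_topology}"
  assumes f: "\<And>b. b \<in> Basis \<Longrightarrow> integrable lborel (f b)"
  shows "(\<integral>x. (\<Prod>b\<in>Basis. f b (x \<bullet> b)) \<partial>lborel) = (\<Prod>b\<in>Basis. \<integral>r. f b r \<partial>lborel)"
proof -
  interpret product_sigma_finite "\<lambda>_::'a. lborel::real measure"
    by standard
  have [measurable]: "b \<in> Basis \<Longrightarrow> f b \<in> borel_measurable borel" for b
    using f by auto
  have coordinate: "(\<Sum>c\<in>Basis. p c *\<^sub>R c) \<bullet> b = p b" if "b \<in> Basis" for p :: "'a \<Rightarrow> real" and b
    using that by (simp add: inner_sum_left inner_Basis if_distrib cong: if_cong)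
  have "(\<integral>x. (\<Prod>b\<in>Basis. f b (x \<bullet> b)) \<partial>lborel) =
      (\<integral>p. (\<Prod>b\<in>Basis. f b ((\<Sum>c\<in>Basis. p c *\<^sub>R c) \<bullet> b)) \<partial>(\<Pi>\<^sub>M b\<in>Basis. lborel))"
    by (subst lborel_eq) (simp add: integral_distr)
  also have "\<dots> = (\<integral>p. (\<Prod>b\<in>Basis. f b (p b)) \<partial>(\<Pi>\<^sub>M b\<in>Basis. lborel))"
    by (intro Bochner_Integration.integral_cong refl prod.cong) (simp_all add: coordinate)
  also have "\<dots> = (\<Prod>b\<in>Basis. \<integral>r. f b r \<partial>lborel)"
    by (rule product_integral_prod) (simp_all add: f)
  finally show ?thesis .
qed

lemma gaussian_fourier:
  fixes \<xi> :: "'a::euclidean_space"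
  assumes a: "a > 0"
  shows "(CLINT x|lborel. complex_of_real (exp (- a * (norm x)\<^sup>2)) * cis (x \<bullet> \<xi>)) =
         complex_of_real ((pi / a) powr (real DIM('a) / 2) * exp (- (norm \<xi>)\<^sup>2 / (4 * a)))"
proof -
  define F where "F b r = complex_of_real (exp (- a * r\<^sup>2)) * cis (r * (\<xi> \<bullet> b))"
    for b :: 'a and r :: real
  have F_integrable: "integrable lborel (F b)" for b
  proof -
    have "integrable lborel (\<lambda>r. complex_of_real (exp (- a * r\<^sup>2)))"
      using integrable_gaussian_real[OF a] by simp
    then show ?thesis
      unfolding F_def by (rule Bochner_Integration.integrable_bound) (auto simp: norm_mult)
  qed
  have product: "complex_of_real (exp (- a * (norm x)\<^sup>2)) * cis (x \<bullet> \<xi>) = (\<Prod>b\<in>Basis. F b (x \<bullet> b))"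
    for x :: 'a
    by (simp add: F_def prod.distrib norm_power2_eq_sum_Basis sum_distrib_left exp_sum cis_conv_exp
        euclidean_inner[of x \<xi>] flip: of_real_prod)
  have "(CLINT x|lborel. complex_of_real (exp (- a * (norm x)\<^sup>2)) * cis (x \<bullet> \<xi>)) =
      (CLINT x|lborel. \<Prod>b\<in>Basis. F b (x \<bullet> b))"
    by (simp only: product)
  also have "\<dots> = (\<Prod>b\<in>Basis. CLINT r|lborel. F b r)"
    by (rule integral_lborel_prod) (rule F_integrable)
  also have "\<dots> = complex_of_real (\<Prod>b\<in>Basis. sqrt (pi / a) * exp (- (\<xi> \<bullet> b)\<^sup>2 / (4 * a)))"
    unfolding F_def of_real_prod by (intro prod.cong refl gaussian_fourier_real[OF a])
  also have "\<dots> = complex_of_real ((pi / a) powr (real DIM('a) / 2) * exp (- (norm \<xi>)\<^sup>2 / (4 * a)))"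
    using a by (simp add: prod.distrib powr_half_sqrt[symmetric] powr_realpow[symmetric] powr_powr
        norm_power2_eq_sum_Basis sum_negf sum_divide_distrib[symmetric] flip: exp_sum)
  finally show ?thesis .
qed

lemma nn_integral_gaussian:
  assumes a: "a > 0"
  shows "(\<integral>\<^sup>+x. exp (- a * (norm (x::'a::euclidean_space))\<^sup>2) \<partial>lborel) =
    ennreal ((pi / a) powr (real DIM('a) / 2))"
proof -
  have "complex_of_real (LINT x|lborel. exp (- a * (norm (x::'a))\<^sup>2)) =
      (CLINT x|lborel. complex_of_real (exp (- a * (norm (x::'a))\<^sup>2)) * cis (x \<bullet> 0))"
    by simp
  also have "\<dots> = complex_of_real ((pi / a) powr (real DIM('a) / 2))"
    using gaussian_fourier[OF a, of "0::'a"] by simp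
  finally have "(LINT x|lborel. exp (- a * (norm (x::'a))\<^sup>2)) = (pi / a) powr (real DIM('a) / 2)"
    by (simp only: of_real_eq_iff)
  then show ?thesis
    using integrable_gaussian[OF a, where 'a='a] by (subst nn_integral_eq_integral) auto
qed

section \<open>Subordinated heat kernels\<close>

definition heat_kernel :: "real \<Rightarrow> 'a::euclidean_space \<Rightarrow> real" where
  "heat_kernel u y = (4 * pi * u) powr (- real DIM('a) / 2) * exp (- (norm y)\<^sup>2 / (4 * u))"

lemma heat_kernel_nonneg: "0 \<le> heat_kernel u y"
  by (simp add: heat_kernel_def)

lemma borel_measurable_heat_kernel [measurable]:
  assumes "f \<in> borel_measurable M" "g \<in> borel_measurable M"
  shows "(\<lambda>x. heat_kernel (f x) (g x)) \<in> borel_measurable M"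
  unfolding heat_kernel_def using assms by measurable

lemma heat_kernel_eq_gaussian:
  assumes "u > 0"
  shows "heat_kernel u (y::'a::euclidean_space) =
    (4 * pi * u) powr (- real DIM('a) / 2) * exp (- (1 / (4 * u)) * (norm y)\<^sup>2)"
  by (simp add: heat_kernel_def)

lemma nn_integral_heat_kernel:
  assumes u: "u > 0"
  shows "(\<integral>\<^sup>+y. heat_kernel u (y::'a::euclidean_space) \<partial>lborel) = 1"
proof -
  define c where "c = (4 * pi * u) powr (- real DIM('a) / 2)"
  have "(\<integral>\<^sup>+y. heat_kernel u (y::'a) \<partial>lborel) =
      (\<integral>\<^sup>+y. ennreal c * exp (- (1 / (4 * u)) * (norm (y::'a))\<^sup>2) \<partial>lborel)"
    by (intro nn_integral_cong) (simp add: heat_kernel_eq_gaussian[OF u] c_def ennreal_mult)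
  also have "\<dots> = ennreal c * (\<integral>\<^sup>+y. exp (- (1 / (4 * u)) * (norm (y::'a))\<^sup>2) \<partial>lborel)"
    by (rule nn_integral_cmult) measurable
  also have "\<dots> = ennreal c * ennreal ((pi / (1 / (4 * u))) powr (real DIM('a) / 2))"
    by (subst nn_integral_gaussian) (use u in auto)
  also have "pi / (1 / (4 * u)) = 4 * pi * u"
    by simp
  also have "ennreal c * ennreal ((4 * pi * u) powr (real DIM('a) / 2)) = 1"
    using u by (simp add: c_def flip: ennreal_mult powr_add)
  finally show ?thesis .
qed

lemma fourier_heat_kernel:
  assumes u: "u > 0"
  shows "fourier (heat_kernel u :: 'a::euclidean_space \<Rightarrow> real) \<xi> =
    complex_of_real (exp (- 4 * pi\<^sup>2 * u * (norm \<xi>)\<^sup>2))"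
proof -
  define c where "c = (4 * pi * u) powr (- real DIM('a) / 2)"
  have "fourier (heat_kernel u :: 'a \<Rightarrow> real) \<xi> = (CLINT y|lborel. complex_of_real c *
      (complex_of_real (exp (- (1 / (4 * u)) * (norm (y::'a))\<^sup>2)) * cis (y \<bullet> (- (2 * pi) *\<^sub>R \<xi>))))"
    unfolding fourier_def
    by (intro Bochner_Integration.integral_cong refl) (simp add: heat_kernel_eq_gaussian[OF u] c_def)
  also have "\<dots> = complex_of_real c *
      (CLINT y|lborel. complex_of_real (exp (- (1 / (4 * u)) * (norm (y::'a))\<^sup>2)) * cis (y \<bullet> (- (2 * pi) *\<^sub>R \<xi>)))"
    by (rule integral_mult_right_zero)
  also have "\<dots> = complex_of_real (c * (pi / (1 / (4 * u))) powr (real DIM('a) / 2) *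
      exp (- (norm (- (2 * pi) *\<^sub>R \<xi>))\<^sup>2 / (4 * (1 / (4 * u)))))"
    by (subst gaussian_fourier) (use u in auto)
  also have "pi / (1 / (4 * u)) = 4 * pi * u"
    by simp
  also have "c * (4 * pi * u) powr (real DIM('a) / 2) = 1"
    using u by (simp add: c_def flip: powr_add)
  also have "- (norm (- (2 * pi) *\<^sub>R \<xi>))\<^sup>2 / (4 * (1 / (4 * u))) = - 4 * pi\<^sup>2 * u * (norm \<xi>)\<^sup>2"
    using u by (simp add: power_mult_distrib field_simps)
  finally show ?thesis
    by simp
qed

lemma heat_kernel_lower:
  assumes "u > 0" "(norm y)\<^sup>2 \<le> u"
  shows "(4 * pi * u) powr (- real DIM('a) / 2) * exp (- 1 / 4) \<le> heat_kernel u (y::'a::euclidean_space)"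
  using assms by (simp add: heat_kernel_def divide_le_eq_1)

definition subordinated_heat_kernel :: "(real \<Rightarrow> real) \<Rightarrow> 'a::euclidean_space \<Rightarrow> real" where
  "subordinated_heat_kernel m y = (LINT u|lborel. m u * heat_kernel u y)"

context
  fixes m :: "real \<Rightarrow> real"
  assumes m_integrable: "integrable lborel m"
    and m_nonneg: "\<And>u. 0 \<le> m u"
    and m_vanishes: "\<forall>u\<le>0. m u = 0"
begin

lemma nn_integral_heat_kernel_mixture:
  "(\<integral>\<^sup>+y. \<integral>\<^sup>+u. m u * heat_kernel u (y::'a::euclidean_space) \<partial>lborel \<partial>lborel) =
    ennreal (LINT u|lborel. m u)"
proof -
  have [measurable]: "m \<in> borel_measurable borel"
    using m_integrable by auto
  have inner: "(\<integral>\<^sup>+y. m u * heat_kernel u (y::'a) \<partial>lborel) = m u" for u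
  proof (cases "u > 0")
    case True
    have "(\<integral>\<^sup>+y. m u * heat_kernel u (y::'a) \<partial>lborel) = (\<integral>\<^sup>+y. m u * ennreal (heat_kernel u (y::'a)) \<partial>lborel)"
      by (simp add: ennreal_mult m_nonneg heat_kernel_nonneg)
    also have "\<dots> = m u * (\<integral>\<^sup>+y. heat_kernel u (y::'a) \<partial>lborel)"
      by (rule nn_integral_cmult) measurable
    also have "\<dots> = m u"
      using True by (simp add: nn_integral_heat_kernel)
    finally show ?thesis .
  qed (simp add: m_vanishes)
  have "(\<integral>\<^sup>+y. \<integral>\<^sup>+u. m u * heat_kernel u (y::'a) \<partial>lborel \<partial>lborel) =
      (\<integral>\<^sup>+u. \<integral>\<^sup>+y. m u * heat_kernel u (y::'a) \<partial>lborel \<partial>lborel)"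
    by (rule lborel_pair.Fubini') measurable
  also have "\<dots> = (\<integral>\<^sup>+u. m u \<partial>lborel)"
    by (simp add: inner)
  also have "\<dots> = ennreal (LINT u|lborel. m u)"
    using m_integrable m_nonneg by (intro nn_integral_eq_integral) auto
  finally show ?thesis .
qed

lemma subordinated_heat_kernel_nonneg: "0 \<le> subordinated_heat_kernel m y"
  unfolding subordinated_heat_kernel_def
  by (intro integral_nonneg_AE AE_I2 mult_nonneg_nonneg m_nonneg heat_kernel_nonneg)

lemma AE_subordinated_heat_kernel_eq_nn_integral:
  "AE y in lborel. ennreal (subordinated_heat_kernel m (y::'a::euclidean_space)) =
    (\<integral>\<^sup>+u. m u * heat_kernel u y \<partial>lborel)"
proof -
  have [measurable]: "m \<in> borel_measurable borel"
    using m_integrable by auto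
  have "AE y in lborel. (\<integral>\<^sup>+u. m u * heat_kernel u (y::'a) \<partial>lborel) \<noteq> \<infinity>"
    by (rule nn_integral_PInf_AE) (simp_all add: nn_integral_heat_kernel_mixture)
  then show ?thesis
  proof eventually_elim
    case (elim y)
    have "subordinated_heat_kernel m y = enn2real (\<integral>\<^sup>+u. m u * heat_kernel u y \<partial>lborel)"
      unfolding subordinated_heat_kernel_def
      by (rule integral_eq_nn_integral) (auto intro: mult_nonneg_nonneg m_nonneg heat_kernel_nonneg)
    with elim show ?case
      by (simp add: ennreal_enn2real_if)
  qed
qed

lemma integrable_subordinated_heat_kernel:
  "integrable lborel (subordinated_heat_kernel m :: 'a::euclidean_space \<Rightarrow> real)"
proof (rule integrableI_nonneg)
  show "subordinated_heat_kernel m \<in> borel_measurable lborel"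
    unfolding subordinated_heat_kernel_def[abs_def]
    using m_integrable by (intro lborel.borel_measurable_lebesgue_integral) auto
  have "(\<integral>\<^sup>+y. subordinated_heat_kernel m (y::'a) \<partial>lborel) =
      (\<integral>\<^sup>+y. \<integral>\<^sup>+u. m u * heat_kernel u (y::'a) \<partial>lborel \<partial>lborel)"
    using AE_subordinated_heat_kernel_eq_nn_integral by (rule nn_integral_cong_AE)
  then show "(\<integral>\<^sup>+y. subordinated_heat_kernel m (y::'a) \<partial>lborel) < \<infinity>"
    by (simp add: nn_integral_heat_kernel_mixture)
qed (simp add: subordinated_heat_kernel_nonneg)

lemma fourier_subordinated_heat_kernel:
  "fourier (subordinated_heat_kernel m :: 'a::euclidean_space \<Rightarrow> real) \<xi> =
    complex_of_real (LINT u|lborel. m u * exp (- 4 * pi\<^sup>2 * u * (norm \<xi>)\<^sup>2))"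
proof -
  have [measurable]: "m \<in> borel_measurable borel"
    using m_integrable by auto
  define \<Phi> where "\<Phi> u y = complex_of_real (m u * heat_kernel u y) * cis (- 2 * pi * (y \<bullet> \<xi>))"
    for u :: real and y :: 'a
  have [measurable]: "(\<lambda>(u, y). \<Phi> u y) \<in> borel_measurable (lborel \<Otimes>\<^sub>M lborel)"
    unfolding \<Phi>_def by measurable
  have "(\<integral>\<^sup>+p. norm (\<Phi> (fst p) (snd p)) \<partial>(lborel \<Otimes>\<^sub>M lborel)) =
      (\<integral>\<^sup>+u. \<integral>\<^sup>+y. m u * heat_kernel u (y::'a) \<partial>lborel \<partial>lborel)"
    by (subst lborel.nn_integral_fst[symmetric])
      (simp_all add: \<Phi>_def norm_mult m_nonneg heat_kernel_nonneg)
  also have "\<dots> = (\<integral>\<^sup>+y. \<integral>\<^sup>+u. m u * heat_kernel u (y::'a) \<partial>lborel \<partial>lborel)"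
    by (rule lborel_pair.Fubini') measurable
  also have "\<dots> = ennreal (LINT u|lborel. m u)"
    by (rule nn_integral_heat_kernel_mixture)
  finally have integrable: "integrable (lborel \<Otimes>\<^sub>M lborel) (\<lambda>(u, y). \<Phi> u y)"
    by (intro integrableI_bounded) (simp_all add: case_prod_beta')
  have inner: "(CLINT y|lborel. \<Phi> u y) = complex_of_real (m u * exp (- 4 * pi\<^sup>2 * u * (norm \<xi>)\<^sup>2))" for u
  proof (cases "u > 0")
    case True
    have "(CLINT y|lborel. \<Phi> u y) = complex_of_real (m u) * fourier (heat_kernel u :: 'a \<Rightarrow> real) \<xi>"
      unfolding \<Phi>_def fourier_def by (simp add: mult.assoc flip: integral_mult_right_zero)
    then show ?thesis
      using True by (simp add: fourier_heat_kernel)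
  qed (simp add: \<Phi>_def m_vanishes)
  have "fourier (subordinated_heat_kernel m :: 'a \<Rightarrow> real) \<xi> = (CLINT y|lborel. CLINT u|lborel. \<Phi> u y)"
    unfolding fourier_def subordinated_heat_kernel_def \<Phi>_def
    by (simp flip: integral_complex_of_real integral_mult_left_zero)
  also have "\<dots> = (CLINT u|lborel. CLINT y|lborel. \<Phi> u y)"
    using lborel_pair.Fubini_integral[OF integrable] by simp
  also have "\<dots> = (CLINT u|lborel. complex_of_real (m u * exp (- 4 * pi\<^sup>2 * u * (norm \<xi>)\<^sup>2)))"
    by (simp only: inner)
  also have "\<dots> = complex_of_real (LINT u|lborel. m u * exp (- 4 * pi\<^sup>2 * u * (norm \<xi>)\<^sup>2))"
    by (rule integral_complex_of_real)
  finally show ?thesis .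
qed

end

section \<open>The Poisson kernel\<close>

lemma poisson_shape_nonneg: "t > 0 \<Longrightarrow> 0 \<le> poisson_shape t z"
  by (simp add: poisson_shape_def)

lemma borel_measurable_poisson_shape [measurable]: "poisson_shape t \<in> borel_measurable borel"
  unfolding poisson_shape_def[abs_def] by measurable

lemma poisson_shape_le:
  fixes z :: "'a::euclidean_space"
  assumes "t > 0"
  shows "poisson_shape t z \<le> t / (t\<^sup>2) powr ((real DIM('a) + 1) / 2)"
  unfolding poisson_shape_def using assms
  by (intro divide_left_mono powr_mono2 mult_pos_pos) (auto simp: add_pos_nonneg)

lemma poisson_shape_shift_lower:
  fixes w y :: "'a::euclidean_space"
  assumes t: "t > 0" and y: "norm y \<le> t"
  shows "3 powr (- ((real DIM('a) + 1) / 2)) * poisson_shape t w \<le> poisson_shape t (w - y)"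
proof -
  define s where "s = (real DIM('a) + 1) / 2"
  have "(norm (w - y))\<^sup>2 \<le> (norm w + norm y)\<^sup>2"
    by (intro power_mono norm_triangle_ineq4) simp
  also have "\<dots> \<le> 2 * (norm w)\<^sup>2 + 2 * (norm y)\<^sup>2"
    using zero_le_power2[of "norm w - norm y"] unfolding power2_diff power2_sum by linarith
  finally have "(norm (w - y))\<^sup>2 \<le> 2 * (norm w)\<^sup>2 + 2 * (norm y)\<^sup>2" .
  moreover have "(norm y)\<^sup>2 \<le> t\<^sup>2"
    using y by (intro power_mono) auto
  ultimately have "t\<^sup>2 + (norm (w - y))\<^sup>2 \<le> 3 * (t\<^sup>2 + (norm w)\<^sup>2)"
    unfolding distrib_left using zero_le_power2[of "norm w"] by linarith
  then have "(t\<^sup>2 + (norm (w - y))\<^sup>2) powr s \<le> 3 powr s * (t\<^sup>2 + (norm w)\<^sup>2) powr s"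
    unfolding powr_mult[symmetric] using t by (intro powr_mono2) (auto simp: s_def add_pos_nonneg)
  then have "t / (3 powr s * (t\<^sup>2 + (norm w)\<^sup>2) powr s) \<le> t / (t\<^sup>2 + (norm (w - y))\<^sup>2) powr s"
    using t by (intro divide_left_mono) (auto simp: add_pos_nonneg)
  then show ?thesis
    by (simp add: poisson_shape_def s_def powr_minus field_simps)
qed

lemma has_bochner_integral_poisson_shape:
  fixes z :: "'a::euclidean_space"
  defines "s \<equiv> (real DIM('a) + 1) / 2"
  assumes t: "t > 0"
  shows "has_bochner_integral lborel
    (\<lambda>u. t / Gamma s * gamma_weight s (t\<^sup>2) u * exp (- u * (norm z)\<^sup>2)) (poisson_shape t z)"
proof -
  have s: "s > 0"
    by (simp add: s_def add_pos_nonneg)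
  have L: "t\<^sup>2 + (norm z)\<^sup>2 > 0"
    using t by (simp add: add_pos_nonneg)
  have "has_bochner_integral lborel (\<lambda>u. t / Gamma s * gamma_weight s (t\<^sup>2 + (norm z)\<^sup>2) u)
      (t / Gamma s * (Gamma s / (t\<^sup>2 + (norm z)\<^sup>2) powr s))"
    by (intro has_bochner_integral_mult_right has_bochner_integral_gamma_weight s L)
  moreover have "t / Gamma s * (Gamma s / (t\<^sup>2 + (norm z)\<^sup>2) powr s) = poisson_shape t z"
    using Gamma_real_pos[OF s] unfolding poisson_shape_def s_def[symmetric] by simp
  moreover have "gamma_weight s (t\<^sup>2) u * exp (- u * (norm z)\<^sup>2) = gamma_weight s (t\<^sup>2 + (norm z)\<^sup>2) u" for u
    using gamma_weight_mult_exp[of s "t\<^sup>2" u "(norm z)\<^sup>2"] by (simp add: mult.commute)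
  ultimately show ?thesis
    by (simp add: mult.assoc)
qed

lemma nn_integral_gamma_weight_gaussian:
  assumes s: "real DIM('a::euclidean_space) / 2 < s" and l: "l > 0"
  shows "(\<integral>\<^sup>+z. \<integral>\<^sup>+u. gamma_weight s l u * exp (- u * (norm (z::'a))\<^sup>2) \<partial>lborel \<partial>lborel) =
    ennreal (pi powr (real DIM('a) / 2) * Gamma (s - real DIM('a) / 2) / l powr (s - real DIM('a) / 2))"
proof -
  define n where "n = real DIM('a)"
  have inner: "(\<integral>\<^sup>+z. gamma_weight s l u * exp (- u * (norm (z::'a))\<^sup>2) \<partial>lborel) =
      ennreal (pi powr (n / 2)) * gamma_weight (s - n / 2) l u" for u
  proof (cases "u > 0")
    case True
    have "(\<integral>\<^sup>+z. gamma_weight s l u * exp (- u * (norm (z::'a))\<^sup>2) \<partial>lborel) =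
        (\<integral>\<^sup>+z. ennreal (gamma_weight s l u) * exp (- u * (norm (z::'a))\<^sup>2) \<partial>lborel)"
      by (simp add: ennreal_mult gamma_weight_nonneg)
    also have "\<dots> = gamma_weight s l u * (\<integral>\<^sup>+z. exp (- u * (norm (z::'a))\<^sup>2) \<partial>lborel)"
      by (rule nn_integral_cmult) measurable
    also have "(\<integral>\<^sup>+z. exp (- u * (norm (z::'a))\<^sup>2) \<partial>lborel) = ennreal ((pi / u) powr (n / 2))"
      unfolding n_def by (rule nn_integral_gaussian[OF True])
    also have "ennreal (gamma_weight s l u) * ennreal ((pi / u) powr (n / 2)) =
        ennreal (pi powr (n / 2) * gamma_weight (s - n / 2) l u)"
      using True by (simp add: gamma_weight_def powr_divide powr_diff mult_ac flip: ennreal_mult)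
    finally show ?thesis
      by (simp add: ennreal_mult gamma_weight_nonneg)
  qed (simp add: gamma_weight_def)
  have "(\<integral>\<^sup>+z. \<integral>\<^sup>+u. gamma_weight s l u * exp (- u * (norm (z::'a))\<^sup>2) \<partial>lborel \<partial>lborel) =
      (\<integral>\<^sup>+u. \<integral>\<^sup>+z. gamma_weight s l u * exp (- u * (norm (z::'a))\<^sup>2) \<partial>lborel \<partial>lborel)"
    by (rule lborel_pair.Fubini'[symmetric]) measurable
  also have "\<dots> = (\<integral>\<^sup>+u. ennreal (pi powr (n / 2)) * gamma_weight (s - n / 2) l u \<partial>lborel)"
    by (rule nn_integral_cong) (rule inner)
  also have "\<dots> = ennreal (pi powr (n / 2)) * (\<integral>\<^sup>+u. gamma_weight (s - n / 2) l u \<partial>lborel)"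
    by (rule nn_integral_cmult) measurable
  also have "\<dots> = ennreal (pi powr (n / 2) * Gamma (s - n / 2) / l powr (s - n / 2))"
    using s l by (simp add: nn_integral_gamma_weight n_def ennreal_mult'[symmetric])
  finally show ?thesis
    by (simp add: n_def)
qed

lemma nn_integral_poisson_shape:
  fixes t :: real
  defines "s \<equiv> (real DIM('a::euclidean_space) + 1) / 2"
  assumes t: "t > 0"
  shows "(\<integral>\<^sup>+z. poisson_shape t (z::'a) \<partial>lborel) = ennreal (pi powr s / Gamma s)"
proof -
  have s: "s > 0"
    by (simp add: s_def add_pos_nonneg)
  have half: "s - real DIM('a) / 2 = 1 / 2"
    by (simp add: s_def field_simps)
  have "ennreal (poisson_shape t z) =
      ennreal (t / Gamma s) * (\<integral>\<^sup>+u. gamma_weight s (t\<^sup>2) u * exp (- u * (norm z)\<^sup>2) \<partial>lborel)"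
    for z :: 'a
  proof -
    have "0 \<le> t / Gamma s * gamma_weight s (t\<^sup>2) u * exp (- u * (norm z)\<^sup>2)" for u
      using s t by (simp add: gamma_weight_nonneg)
    then have "ennreal (poisson_shape t z) =
        (\<integral>\<^sup>+u. t / Gamma s * gamma_weight s (t\<^sup>2) u * exp (- u * (norm z)\<^sup>2) \<partial>lborel)"
      using has_bochner_integral_poisson_shape[OF t, of z, folded s_def]
      by (subst nn_integral_eq_integral) (auto simp: has_bochner_integral_iff)
    also have "\<dots> = (\<integral>\<^sup>+u. ennreal (t / Gamma s) * (gamma_weight s (t\<^sup>2) u * exp (- u * (norm z)\<^sup>2)) \<partial>lborel)"
      using t Gamma_real_pos[OF s] by (intro nn_integral_cong) (simp add: gamma_weight_nonneg mult.assoc flip: ennreal_mult)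
    also have "\<dots> = ennreal (t / Gamma s) * (\<integral>\<^sup>+u. gamma_weight s (t\<^sup>2) u * exp (- u * (norm z)\<^sup>2) \<partial>lborel)"
      by (rule nn_integral_cmult) measurable
    finally show ?thesis .
  qed
  then have "(\<integral>\<^sup>+z. poisson_shape t (z::'a) \<partial>lborel) = ennreal (t / Gamma s) *
      (\<integral>\<^sup>+z. \<integral>\<^sup>+u. gamma_weight s (t\<^sup>2) u * exp (- u * (norm (z::'a))\<^sup>2) \<partial>lborel \<partial>lborel)"
    by (simp add: nn_integral_cmult)
  also have "\<dots> = ennreal (t / Gamma s) * ennreal (pi powr (real DIM('a) / 2) * Gamma (1 / 2) / (t\<^sup>2) powr (1 / 2))"
    using nn_integral_gamma_weight_gaussian[of s "t\<^sup>2", where 'a='a] t unfolding half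
    by (simp add: s_def)
  also have "\<dots> = ennreal (pi powr (real DIM('a) / 2) * Gamma (1 / 2) / Gamma s)"
    using t Gamma_real_pos[OF s] by (simp add: powr_half_sqrt flip: ennreal_mult)
  also have "pi powr (real DIM('a) / 2) * Gamma (1 / 2) = pi powr s"
    by (simp add: Gamma_one_half_real s_def add_divide_distrib powr_half_sqrt[symmetric] flip: powr_add)
  finally show ?thesis .
qed

lemma integrable_poisson_shape:
  "t > 0 \<Longrightarrow> integrable lborel (poisson_shape t :: 'a::euclidean_space \<Rightarrow> real)"
  by (intro integrableI_nonneg) (simp_all add: poisson_shape_nonneg nn_integral_poisson_shape)

lemma poisson_const_nonneg: "0 \<le> poisson_const TYPE('a::euclidean_space)"
  unfolding poisson_const_def
  by (intro inverse_nonnegative_iff_nonnegative[THEN iffD2] integral_nonneg_AE AE_I2)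
    (simp add: poisson_shape_nonneg)

lemma poisson_nonneg: "t > 0 \<Longrightarrow> 0 \<le> poisson t x"
  unfolding poisson_def by (intro mult_nonneg_nonneg poisson_const_nonneg poisson_shape_nonneg)

lemma borel_measurable_poisson [measurable]: "poisson t \<in> borel_measurable borel"
  unfolding poisson_def[abs_def] by measurable

lemma integrable_poisson: "t > 0 \<Longrightarrow> integrable lborel (poisson t :: 'a::euclidean_space \<Rightarrow> real)"
  unfolding poisson_def[abs_def] by (simp add: integrable_poisson_shape)

lemma poisson_bounded: "t > 0 \<Longrightarrow> \<exists>B. \<forall>x. \<bar>poisson t x\<bar> \<le> B"
  using poisson_shape_le poisson_const_nonneg poisson_shape_nonneg
  by (metis abs_of_nonneg mult_left_mono poisson_def poisson_nonneg)

lemma poisson_shift_lower: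
  fixes w y :: "'a::euclidean_space"
  assumes "t > 0" "norm y \<le> t"
  shows "3 powr (- ((real DIM('a) + 1) / 2)) * poisson t w \<le> poisson t (w - y)"
  using mult_left_mono[OF poisson_shape_shift_lower[OF assms] poisson_const_nonneg]
  by (simp add: poisson_def mult_ac)

section \<open>Kernels with equal Fourier transforms\<close>

lemma integrable_pair_lborel_bound:
  fixes F :: "'a::euclidean_space \<times> 'b::euclidean_space \<Rightarrow> 'c::{banach, second_countable_topology}"
  assumes [measurable]: "F \<in> borel_measurable (lborel \<Otimes>\<^sub>M lborel)"
    and f: "integrable lborel f" "\<And>x. 0 \<le> f x" and g: "integrable lborel g" "\<And>y. 0 \<le> g y"
    and bound: "\<And>x y. norm (F (x, y)) \<le> f x * g y"
  shows "integrable (lborel \<Otimes>\<^sub>M lborel) F"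
proof (rule integrableI_bounded)
  have [measurable]: "f \<in> borel_measurable borel" "g \<in> borel_measurable borel"
    using f g by auto
  have "(\<integral>\<^sup>+p. norm (F p) \<partial>(lborel \<Otimes>\<^sub>M lborel)) \<le> (\<integral>\<^sup>+p. f (fst p) * g (snd p) \<partial>(lborel \<Otimes>\<^sub>M lborel))"
    using bound by (intro nn_integral_mono) (auto intro!: ennreal_leI)
  also have "\<dots> = (\<integral>\<^sup>+x. \<integral>\<^sup>+y. ennreal (f x) * ennreal (g y) \<partial>lborel \<partial>lborel)"
    by (subst lborel.nn_integral_fst[symmetric]) (simp_all add: ennreal_mult f g)
  also have "\<dots> = (\<integral>\<^sup>+x. ennreal (f x) * (\<integral>\<^sup>+y. g y \<partial>lborel) \<partial>lborel)"
    by (intro nn_integral_cong nn_integral_cmult) auto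
  also have "\<dots> = (\<integral>\<^sup>+x. f x \<partial>lborel) * (\<integral>\<^sup>+y. g y \<partial>lborel)"
    by (rule nn_integral_multc) auto
  also have "\<dots> < \<infinity>"
    using f g by (auto simp: integrable_iff_bounded ennreal_mult_less_top)
  finally show "(\<integral>\<^sup>+p. norm (F p) \<partial>(lborel \<Otimes>\<^sub>M lborel)) < \<infinity>" .
qed simp

lemma fourier_integrand_integrable:
  "integrable lborel G \<Longrightarrow> integrable lborel (\<lambda>y. complex_of_real (G y) * cis (- 2 * pi * (y \<bullet> \<xi>)))"
  by (rule Bochner_Integration.integrable_bound[of _ "\<lambda>y. complex_of_real (G y)"]) (auto simp: norm_mult)

lemma fourier_diff:
  assumes "integrable lborel G" "integrable lborel H"
  shows "fourier (\<lambda>y. G y - H y) \<xi> = fourier G \<xi> - fourier H \<xi>"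
  unfolding fourier_def of_real_diff left_diff_distrib
  by (rule Bochner_Integration.integral_diff[OF fourier_integrand_integrable[OF assms(1)]
        fourier_integrand_integrable[OF assms(2)]])

lemma integral_mult_fourier_eq_0:
  fixes D E :: "'a::euclidean_space \<Rightarrow> real"
  assumes D: "integrable lborel D" and fourier_D: "\<And>\<xi>. fourier D \<xi> = 0" and E: "integrable lborel E"
  shows "(CLINT y|lborel. complex_of_real (D y) *
    (CLINT \<xi>|lborel. complex_of_real (E \<xi>) * cis (\<xi> \<bullet> (x - y)))) = 0"
proof -
  have [measurable]: "D \<in> borel_measurable borel" "E \<in> borel_measurable borel"
    using D E by auto
  define \<Phi> where "\<Phi> y \<xi> = complex_of_real (D y) * (complex_of_real (E \<xi>) * cis (\<xi> \<bullet> x) * cis (- (y \<bullet> \<xi>)))"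
    for y \<xi> :: 'a
  have integrable: "integrable (lborel \<Otimes>\<^sub>M lborel) (\<lambda>(\<xi>, y). \<Phi> y \<xi>)"
    using E D by (intro integrable_pair_lborel_bound[where f = "\<lambda>\<xi>. \<bar>E \<xi>\<bar>" and g = "\<lambda>y. \<bar>D y\<bar>"])
      (auto simp: \<Phi>_def norm_mult)
  have inner: "(CLINT y|lborel. \<Phi> y \<xi>) = 0" for \<xi>
  proof -
    have "(CLINT y|lborel. \<Phi> y \<xi>) = complex_of_real (E \<xi>) * cis (\<xi> \<bullet> x) * fourier D ((1 / (2 * pi)) *\<^sub>R \<xi>)"
      unfolding fourier_def \<Phi>_def by (simp add: mult_ac flip: integral_mult_right_zero)
    then show ?thesis
      by (simp add: fourier_D)
  qed
  have "(CLINT y|lborel. complex_of_real (D y) *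
      (CLINT \<xi>|lborel. complex_of_real (E \<xi>) * cis (\<xi> \<bullet> (x - y)))) = (CLINT y|lborel. CLINT \<xi>|lborel. \<Phi> y \<xi>)"
    unfolding \<Phi>_def
    by (simp add: cis_mult inner_diff_right inner_commute mult_ac flip: integral_mult_right_zero)
  also have "\<dots> = (CLINT \<xi>|lborel. CLINT y|lborel. \<Phi> y \<xi>)"
    using lborel_pair.Fubini_integral[OF integrable] by simp
  finally show ?thesis
    by (simp add: inner)
qed

lemma integral_gaussian_eq_0_if_fourier_eq_0:
  fixes D :: "'a::euclidean_space \<Rightarrow> real"
  assumes D: "integrable lborel D" and fourier_D: "\<And>\<xi>. fourier D \<xi> = 0" and u: "u > 0"
  shows "(LINT y|lborel. D y * exp (- u * (norm (x - y))\<^sup>2)) = 0"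
proof -
  define a where "a = 1 / (4 * u)"
  have a: "a > 0"
    using u by (simp add: a_def)
  define \<kappa> where "\<kappa> = (pi / a) powr (real DIM('a) / 2)"
  have \<kappa>: "\<kappa> > 0"
    using a by (simp add: \<kappa>_def)
  have inversion: "complex_of_real (exp (- u * (norm w)\<^sup>2)) = complex_of_real (1 / \<kappa>) *
      (CLINT \<xi>|lborel. complex_of_real (exp (- a * (norm \<xi>)\<^sup>2)) * cis (\<xi> \<bullet> w))" for w :: 'a
    using \<kappa> u unfolding gaussian_fourier[OF a] \<kappa>_def[symmetric] by (simp add: a_def)
  have "complex_of_real (LINT y|lborel. D y * exp (- u * (norm (x - y))\<^sup>2)) =
      (CLINT y|lborel. complex_of_real (1 / \<kappa>) * (complex_of_real (D y) *
        (CLINT \<xi>|lborel. complex_of_real (exp (- a * (norm \<xi>)\<^sup>2)) * cis (\<xi> \<bullet> (x - y)))))"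
    unfolding integral_complex_of_real[symmetric] of_real_mult inversion by (simp only: mult_ac)
  also have "\<dots> = 0"
    using integral_mult_fourier_eq_0[OF D fourier_D integrable_gaussian[OF a]] by simp
  finally show ?thesis
    by simp
qed

lemma integral_gaussian_mixture_eq_0_if_fourier_eq_0:
  fixes D :: "'a::euclidean_space \<Rightarrow> real"
  assumes D: "integrable lborel D" and fourier_D: "\<And>\<xi>. fourier D \<xi> = 0"
    and m: "integrable lborel m" and m_vanishes: "\<forall>u\<le>0. m u = 0"
  shows "(LINT y|lborel. D y * (LINT u|lborel. m u * exp (- u * (norm (x - y))\<^sup>2))) = 0"
proof -
  have [measurable]: "D \<in> borel_measurable borel" "m \<in> borel_measurable borel"
    using D m by auto
  define \<Psi> where "\<Psi> u y = m u * (D y * exp (- u * (norm (x - y))\<^sup>2))" for u and y :: 'a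
  have bound: "norm (\<Psi> u y) \<le> \<bar>m u\<bar> * \<bar>D y\<bar>" for u y
  proof (cases "u > 0")
    case True
    then have "\<bar>D y\<bar> * exp (- u * (norm (x - y))\<^sup>2) \<le> \<bar>D y\<bar>"
      by (intro mult_left_le) auto
    then show ?thesis
      by (simp add: \<Psi>_def abs_mult mult_left_mono)
  qed (simp add: \<Psi>_def m_vanishes)
  have integrable: "integrable (lborel \<Otimes>\<^sub>M lborel) (\<lambda>(u, y). \<Psi> u y)"
    using m D bound
    by (intro integrable_pair_lborel_bound[where f = "\<lambda>u. \<bar>m u\<bar>" and g = "\<lambda>y. \<bar>D y\<bar>"])
      (auto simp: \<Psi>_def)
  have inner: "(LINT y|lborel. \<Psi> u y) = 0" for u
  proof (cases "u > 0")
    case True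
    then show ?thesis
      unfolding \<Psi>_def
      using integral_gaussian_eq_0_if_fourier_eq_0[OF D fourier_D True] by simp
  qed (simp add: \<Psi>_def m_vanishes)
  have "(LINT y|lborel. D y * (LINT u|lborel. m u * exp (- u * (norm (x - y))\<^sup>2))) =
      (LINT y|lborel. LINT u|lborel. \<Psi> u y)"
    unfolding \<Psi>_def by (simp add: mult.left_commute flip: integral_mult_right_zero)
  also have "\<dots> = (LINT u|lborel. LINT y|lborel. \<Psi> u y)"
    by (rule lborel_pair.Fubini_integral[OF integrable])
  also have "\<dots> = 0"
    by (simp add: inner)
  finally show ?thesis .
qed

lemma integrable_mult_bounded:
  fixes G h :: "'a \<Rightarrow> real"
  assumes G: "integrable M G" and [measurable]: "h \<in> borel_measurable M"
    and bound: "\<And>y. \<bar>h y\<bar> \<le> B"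
  shows "integrable M (\<lambda>y. G y * h y)"
proof (rule Bochner_Integration.integrable_bound)
  show "integrable M (\<lambda>y. B * G y)"
    using G by simp
  show "AE y in M. norm (G y * h y) \<le> norm (B * G y)"
  proof (intro AE_I2)
    fix y
    have "\<bar>G y\<bar> * \<bar>h y\<bar> \<le> \<bar>G y\<bar> * \<bar>B\<bar>"
      using bound[of y] by (intro mult_left_mono) auto
    then show "norm (G y * h y) \<le> norm (B * G y)"
      by (simp add: abs_mult mult.commute)
  qed
qed (use G in simp)

lemma conv_poisson_eq_if_fourier_eq:
  fixes G H :: "'a::euclidean_space \<Rightarrow> real"
  assumes G: "integrable lborel G" and H: "integrable lborel H"
    and fourier_eq: "\<And>\<xi>. fourier G \<xi> = fourier H \<xi>" and t: "t > 0"
  shows "conv G (poisson t) x = conv H (poisson t) x"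
proof -
  define s where "s = (real DIM('a) + 1) / 2"
  define m where "m u = t / Gamma s * gamma_weight s (t\<^sup>2) u" for u
  have m: "integrable lborel m"
    unfolding m_def[abs_def] using t by (simp add: s_def add_pos_nonneg integrable_gamma_weight)
  have shape: "poisson_shape t z = (LINT u|lborel. m u * exp (- u * (norm z)\<^sup>2))" for z :: 'a
    using has_bochner_integral_poisson_shape[OF t, of z] by (simp add: has_bochner_integral_iff m_def s_def)
  obtain B where B: "\<And>y. \<bar>poisson t (x - y)\<bar> \<le> B"
    using poisson_bounded[OF t] by blast
  have integrable: "integrable lborel (\<lambda>y. F y * poisson t (x - y))" if "integrable lborel F" for F
    by (rule integrable_mult_bounded[OF that _ B]) measurable
  have "conv G (poisson t) x - conv H (poisson t) x =
      (LINT y|lborel. G y * poisson t (x - y) - H y * poisson t (x - y))"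
    unfolding conv_def using integrable[OF G] integrable[OF H] by simp
  also have "\<dots> = (LINT y|lborel. poisson_const TYPE('a) * ((G y - H y) * poisson_shape t (x - y)))"
    by (simp add: poisson_def algebra_simps)
  also have "\<dots> = poisson_const TYPE('a) * (LINT y|lborel. (G y - H y) * poisson_shape t (x - y))"
    by (rule integral_mult_right_zero)
  also have "(LINT y|lborel. (G y - H y) * poisson_shape t (x - y)) = 0"
    unfolding shape using G H
    by (intro integral_gaussian_mixture_eq_0_if_fourier_eq_0[OF _ _ m])
      (simp_all add: fourier_diff fourier_eq m_def gamma_weight_def)
  finally show ?thesis
    by simp
qed

section \<open>The Bessel kernel\<close>

definition bessel_weight :: "real \<Rightarrow> real \<Rightarrow> real" where
  "bessel_weight \<alpha> u = gamma_weight (\<alpha> / 2) 1 u / Gamma (\<alpha> / 2)"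

lemma bessel_weight_subordinator:
  assumes "\<alpha> > 0"
  shows "integrable lborel (bessel_weight \<alpha>)"
    and "\<And>u. 0 \<le> bessel_weight \<alpha> u"
    and "\<forall>u\<le>0. bessel_weight \<alpha> u = 0"
  using assms
  by (simp_all add: bessel_weight_def[abs_def] integrable_gamma_weight gamma_weight_nonneg)
    (simp_all add: bessel_weight_def gamma_weight_def)

lemma fourier_subordinated_bessel_weight:
  assumes \<alpha>: "\<alpha> > 0"
  shows "fourier (subordinated_heat_kernel (bessel_weight \<alpha>) :: 'a::euclidean_space \<Rightarrow> real) \<xi> =
    complex_of_real ((1 + 4 * pi\<^sup>2 * (norm \<xi>)\<^sup>2) powr (- \<alpha> / 2))"
proof -
  define L where "L = 1 + 4 * pi\<^sup>2 * (norm \<xi>)\<^sup>2"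
  have L: "L > 0"
    by (simp add: L_def add_pos_nonneg)
  have "bessel_weight \<alpha> u * exp (- 4 * pi\<^sup>2 * u * (norm \<xi>)\<^sup>2) = gamma_weight (\<alpha> / 2) L u / Gamma (\<alpha> / 2)" for u
    using gamma_weight_mult_exp[of "\<alpha> / 2" 1 u "4 * pi\<^sup>2 * (norm \<xi>)\<^sup>2"]
    by (simp add: bessel_weight_def L_def mult_ac)
  then have "fourier (subordinated_heat_kernel (bessel_weight \<alpha>) :: 'a \<Rightarrow> real) \<xi> =
      complex_of_real ((LINT u|lborel. gamma_weight (\<alpha> / 2) L u) / Gamma (\<alpha> / 2))"
    by (simp add: fourier_subordinated_heat_kernel[OF bessel_weight_subordinator[OF \<alpha>]])
  also have "(LINT u|lborel. gamma_weight (\<alpha> / 2) L u) / Gamma (\<alpha> / 2) = L powr (- \<alpha> / 2)"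
  proof -
    have "Gamma (\<alpha> / 2) > 0"
      using \<alpha> by (intro Gamma_real_pos) simp
    then have "Gamma (\<alpha> / 2) \<noteq> 0"
      by linarith
    with \<alpha> L show ?thesis
      by (simp add: integral_gamma_weight powr_minus_divide)
  qed
  finally show ?thesis
    by (simp add: L_def)
qed

lemma bessel_kernel_spec:
  assumes "\<alpha> > 0"
  shows "integrable lborel (bessel_kernel \<alpha> :: 'a::euclidean_space \<Rightarrow> real)"
    and "fourier (bessel_kernel \<alpha> :: 'a \<Rightarrow> real) \<xi> =
      complex_of_real ((1 + 4 * pi\<^sup>2 * (norm \<xi>)\<^sup>2) powr (- \<alpha> / 2))"
proof -
  let ?spec = "\<lambda>G::'a \<Rightarrow> real. G \<in> borel_measurable lborel \<and> integrable lborel G \<and>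
      (\<forall>\<xi>. fourier G \<xi> = complex_of_real ((1 + 4 * pi\<^sup>2 * (norm \<xi>)\<^sup>2) powr (- \<alpha> / 2)))"
  have "integrable lborel (subordinated_heat_kernel (bessel_weight \<alpha>) :: 'a \<Rightarrow> real)"
    by (rule integrable_subordinated_heat_kernel[OF bessel_weight_subordinator[OF assms]])
  then have "?spec (subordinated_heat_kernel (bessel_weight \<alpha>))"
    using assms by (simp add: fourier_subordinated_bessel_weight)
  then have "?spec (bessel_kernel \<alpha>)"
    unfolding bessel_kernel_def by (rule someI[where P = ?spec])
  then show "integrable lborel (bessel_kernel \<alpha> :: 'a \<Rightarrow> real)"
    and "fourier (bessel_kernel \<alpha> :: 'a \<Rightarrow> real) \<xi> =
      complex_of_real ((1 + 4 * pi\<^sup>2 * (norm \<xi>)\<^sup>2) powr (- \<alpha> / 2))"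
    by auto
qed

text \<open>Being chosen by \<open>SOME\<close>, \<^const>\<open>bessel_kernel\<close> may differ from the subordinated kernel on a
  null set; only convolutions are compared.\<close>
lemma conv_bessel_kernel_poisson:
  assumes "\<alpha> > 0" "t > 0"
  shows "conv (bessel_kernel \<alpha>) (poisson t) x =
    conv (subordinated_heat_kernel (bessel_weight \<alpha>)) (poisson t) (x::'a::euclidean_space)"
  using assms
  by (intro conv_poisson_eq_if_fourier_eq bessel_kernel_spec
      integrable_subordinated_heat_kernel[OF bessel_weight_subordinator[OF assms(1)]])
    (simp_all add: bessel_kernel_spec fourier_subordinated_bessel_weight)

lemma bessel_weight_mult_heat_kernel_lower:
  fixes \<alpha> :: real and y :: "'a::euclidean_space"
  defines "\<beta> \<equiv> (\<alpha> - real DIM('a)) / 2 - 1"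
  assumes \<alpha>: "0 < \<alpha>" "\<alpha> < real DIM('a)" and t: "0 < t" "t \<le> T" and y: "norm y \<le> t"
    and u: "t\<^sup>2 \<le> u" "u \<le> 2 * t\<^sup>2"
  shows "(4 * pi) powr (- real DIM('a) / 2) * exp (- 1 / 4) / Gamma (\<alpha> / 2) *
      ((2 * t\<^sup>2) powr \<beta> * exp (- 2 * T\<^sup>2)) \<le> bessel_weight \<alpha> u * heat_kernel u y"
proof -
  define c where "c = (4 * pi) powr (- real DIM('a) / 2) * exp (- 1 / 4) / Gamma (\<alpha> / 2)"
  have "t\<^sup>2 > 0"
    using t by simp
  with u have u0: "u > 0"
    by linarith
  have "(2 * t\<^sup>2) powr \<beta> \<le> u powr \<beta>"
    using u u0 \<alpha> by (intro powr_mono2') (auto simp: \<beta>_def)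
  moreover have "t\<^sup>2 \<le> T\<^sup>2"
    using t by (intro power_mono) auto
  then have "exp (- 2 * T\<^sup>2) \<le> exp (- u)"
    using u by simp
  ultimately have "c * ((2 * t\<^sup>2) powr \<beta> * exp (- 2 * T\<^sup>2)) \<le> c * (u powr \<beta> * exp (- u))"
    using \<alpha> by (intro mult_left_mono mult_mono) (auto simp: c_def)
  also have "u powr \<beta> = u powr (\<alpha> / 2 - 1) * u powr (- real DIM('a) / 2)"
    unfolding \<beta>_def
    by (simp only: powr_add[symmetric]) (rule arg_cong[where f = "\<lambda>e. u powr e"], simp add: field_simps)
  also have "c * (u powr (\<alpha> / 2 - 1) * u powr (- real DIM('a) / 2) * exp (- u)) =
      bessel_weight \<alpha> u * ((4 * pi * u) powr (- real DIM('a) / 2) * exp (- 1 / 4))"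
    using u0 by (simp add: c_def bessel_weight_def gamma_weight_def powr_mult field_simps)
  also have "\<dots> \<le> bessel_weight \<alpha> u * heat_kernel u y"
    using \<alpha> u0 u power_mono[OF y, of 2]
    by (intro mult_left_mono heat_kernel_lower bessel_weight_subordinator(2)) auto
  finally show ?thesis
    by (simp add: c_def)
qed

lemma nn_integral_bessel_weight_heat_kernel_lower:
  assumes \<alpha>: "0 < \<alpha>" "\<alpha> < real DIM('a::euclidean_space)"
  obtains K where "K > 0"
    and "\<And>t y. 0 < t \<Longrightarrow> t \<le> T \<Longrightarrow> norm (y::'a) \<le> t \<Longrightarrow>
      ennreal (K * t powr (\<alpha> - real DIM('a))) \<le> (\<integral>\<^sup>+u. bessel_weight \<alpha> u * heat_kernel u y \<partial>lborel)"
proof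
  define n where "n = real DIM('a)"
  define \<beta> where "\<beta> = (\<alpha> - n) / 2 - 1"
  define c where "c = (4 * pi) powr (- n / 2) * exp (- 1 / 4) / Gamma (\<alpha> / 2)"
  have c: "c > 0"
    using \<alpha> by (simp add: c_def)
  show "c * 2 powr \<beta> * exp (- 2 * T\<^sup>2) > 0"
    using c by simp
  fix t and y :: 'a
  assume t: "0 < t" "t \<le> T" and y: "norm y \<le> t"
  define M where "M = c * ((2 * t\<^sup>2) powr \<beta> * exp (- 2 * T\<^sup>2))"
  have "ennreal (M * t\<^sup>2) = (\<integral>\<^sup>+u. ennreal M * indicator {t\<^sup>2 .. 2 * t\<^sup>2} u \<partial>lborel)"
    using c by (subst nn_integral_cmult_indicator) (auto simp: M_def ennreal_mult)
  also have "\<dots> \<le> (\<integral>\<^sup>+u. bessel_weight \<alpha> u * heat_kernel u y \<partial>lborel)"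
    using bessel_weight_mult_heat_kernel_lower[OF \<alpha> t y]
    by (intro nn_integral_mono) (auto simp: indicator_def M_def c_def \<beta>_def n_def intro!: ennreal_leI)
  also have "M * t\<^sup>2 = c * 2 powr \<beta> * exp (- 2 * T\<^sup>2) * t powr (\<alpha> - n)"
  proof -
    have t2: "t\<^sup>2 = t powr 2"
      using t by (simp add: powr_numeral)
    have "(t\<^sup>2) powr \<beta> * t\<^sup>2 = t powr (2 * \<beta> + 2)"
      unfolding t2 by (simp add: powr_powr powr_add)
    also have "2 * \<beta> + 2 = \<alpha> - n"
      by (simp add: \<beta>_def field_simps)
    finally show ?thesis
      by (simp add: M_def powr_mult mult_ac)
  qed
  finally show "ennreal (c * 2 powr \<beta> * exp (- 2 * T\<^sup>2) * t powr (\<alpha> - real DIM('a))) \<le>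
      (\<integral>\<^sup>+u. bessel_weight \<alpha> u * heat_kernel u y \<partial>lborel)"
    by (simp add: n_def)
qed

lemma subordinated_bessel_weight_lower:
  assumes \<alpha>: "0 < \<alpha>" "\<alpha> < real DIM('a::euclidean_space)"
  obtains K where "K > 0"
    and "\<And>t. 0 < t \<Longrightarrow> t \<le> T \<Longrightarrow>
      AE y in lborel. norm y \<le> t \<longrightarrow> K * t powr (\<alpha> - real DIM('a)) \<le> subordinated_heat_kernel (bessel_weight \<alpha>) (y::'a)"
proof -
  obtain K where K: "K > 0"
    and lower: "\<And>t y. 0 < t \<Longrightarrow> t \<le> T \<Longrightarrow> norm (y::'a) \<le> t \<Longrightarrow>
      ennreal (K * t powr (\<alpha> - real DIM('a))) \<le> (\<integral>\<^sup>+u. bessel_weight \<alpha> u * heat_kernel u y \<partial>lborel)"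
    using nn_integral_bessel_weight_heat_kernel_lower[OF \<alpha>] by blast
  note nonneg = subordinated_heat_kernel_nonneg[OF bessel_weight_subordinator[OF \<alpha>(1)]]
  show ?thesis
  proof (rule that[OF K])
    fix t assume t: "0 < t" "t \<le> T"
    show "AE y in lborel. norm y \<le> t \<longrightarrow> K * t powr (\<alpha> - real DIM('a)) \<le>
        subordinated_heat_kernel (bessel_weight \<alpha>) (y::'a)"
      using AE_subordinated_heat_kernel_eq_nn_integral[OF bessel_weight_subordinator[OF \<alpha>(1)]]
    proof eventually_elim
      case (elim y)
      show ?case
        using lower[OF t, of y] unfolding elim[symmetric] ennreal_le_iff[OF nonneg] by simp
    qed
  qed
qed

lemma conv_poisson_lower:
  fixes K :: "'a::euclidean_space \<Rightarrow> real"
  assumes K: "integrable lborel K" "\<And>y. 0 \<le> K y" and t: "t > 0"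
    and k: "0 \<le> k" "AE y in lborel. norm y \<le> t \<longrightarrow> k \<le> K y"
  shows "k * 3 powr (- ((real DIM('a) + 1) / 2)) * measure lborel (ball (0::'a) t) * poisson t w \<le>
    conv K (poisson t) w"
proof -
  define q where "q = 3 powr (- ((real DIM('a) + 1) / 2))"
  have [measurable]: "K \<in> borel_measurable borel"
    using K by auto
  obtain B where B: "\<And>y. \<bar>poisson t (w - y)\<bar> \<le> B"
    using poisson_bounded[OF t] by blast
  have "k * q * measure lborel (ball (0::'a) t) * poisson t w =
      (LINT y|lborel. indicator (ball (0::'a) t) y * (k * q * poisson t w))"
    by (simp add: mult_ac)
  also have "\<dots> \<le> (LINT y|lborel. K y * poisson t (w - y))"
  proof (rule integral_mono_AE)
    show "integrable lborel (\<lambda>y. indicator (ball (0::'a) t) y * (k * q * poisson t w))"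
      by (intro integrable_mult_left integrable_real_indicator) (simp_all add: emeasure_lborel_ball_finite[unfolded infinity_ennreal_def])
    show "integrable lborel (\<lambda>y. K y * poisson t (w - y))"
      by (rule integrable_mult_bounded[OF K(1) _ B]) measurable
    show "AE y in lborel. indicator (ball (0::'a) t) y * (k * q * poisson t w) \<le> K y * poisson t (w - y)"
      using k(2)
    proof eventually_elim
      case (elim y)
      show ?case
      proof (cases "norm y < t")
        case True
        have "q * poisson t w \<le> poisson t (w - y)"
          using True t by (simp add: q_def poisson_shift_lower)
        moreover have "0 \<le> q * poisson t w"
          unfolding q_def by (intro mult_nonneg_nonneg powr_ge_zero poisson_nonneg t)
        ultimately have "k * (q * poisson t w) \<le> K y * poisson t (w - y)"
          using elim True K(2) by (intro mult_mono) auto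
        with True show ?thesis
          by (simp add: mult.assoc)
      qed (simp add: K(2) poisson_nonneg[OF t])
    qed
  qed
  finally show ?thesis
    by (simp add: conv_def q_def)
qed

lemma conv_bessel_kernel_poisson_lower:
  assumes \<alpha>: "0 < \<alpha>" "\<alpha> < real DIM('a::euclidean_space)"
  obtains C where "C > 0"
    and "\<And>t x. 0 < t \<Longrightarrow> t \<le> T \<Longrightarrow> C * t powr \<alpha> * poisson t x \<le> conv (bessel_kernel \<alpha>) (poisson t) (x::'a)"
proof -
  obtain K where K: "K > 0"
    and K_lower: "\<And>t. 0 < t \<Longrightarrow> t \<le> T \<Longrightarrow> AE y in lborel. norm y \<le> t \<longrightarrow>
      K * t powr (\<alpha> - real DIM('a)) \<le> subordinated_heat_kernel (bessel_weight \<alpha>) (y::'a)"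
    using subordinated_bessel_weight_lower[OF \<alpha>] by blast
  define q where "q = 3 powr (- ((real DIM('a) + 1) / 2))"
  define V where "V = measure lborel (ball (0::'a) 1)"
  have V: "V > 0"
    unfolding V_def by (rule content_ball_pos) simp
  show ?thesis
  proof (rule that[of "K * q * V"])
    show "K * q * V > 0"
      using K V by (simp add: q_def)
  next
    fix t and x :: 'a
    assume t: "0 < t" "t \<le> T"
    have "K * q * V * t powr \<alpha> * poisson t x =
        K * t powr (\<alpha> - real DIM('a)) * q * measure lborel (ball (0::'a) t) * poisson t x"
      using t by (simp add: V_def content_ball_conv_unit_ball[of t] powr_realpow[symmetric] mult_ac
          flip: powr_add)
    also have "\<dots> \<le> conv (subordinated_heat_kernel (bessel_weight \<alpha>)) (poisson t) x"
      unfolding q_def using K t \<alpha>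
      by (intro conv_poisson_lower K_lower integrable_subordinated_heat_kernel subordinated_heat_kernel_nonneg
          bessel_weight_subordinator) simp_all
    also have "\<dots> = conv (bessel_kernel \<alpha>) (poisson t) x"
      using \<alpha> t by (simp add: conv_bessel_kernel_poisson)
    finally show "K * q * V * t powr \<alpha> * poisson t x \<le> conv (bessel_kernel \<alpha>) (poisson t) x" .
  qed
qed

section \<open>Convolutions with \<open>L^p\<close> functions\<close>

lemma lborel_distr_reflect: "distr lborel borel (\<lambda>x. v - x) = (lborel :: 'a::euclidean_space measure)"
proof -
  have "(lborel :: 'a measure) = density (distr lborel borel (\<lambda>x. v + (-1) *\<^sub>R x)) (\<lambda>_. \<bar>-1::real\<bar> ^ DIM('a))"
    by (rule lborel_affine) simp
  then show ?thesis
    by (simp add: density_1)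
qed

lemma nn_integral_lborel_reflect:
  fixes f :: "'a::euclidean_space \<Rightarrow> ennreal"
  assumes [measurable]: "f \<in> borel_measurable borel"
  shows "(\<integral>\<^sup>+x. f (v - x) \<partial>lborel) = (\<integral>\<^sup>+x. f x \<partial>lborel)"
  by (subst (2) lborel_distr_reflect[symmetric, of v]) (simp add: nn_integral_distr)

lemma nn_integral_lborel_translate:
  fixes f :: "'a::euclidean_space \<Rightarrow> ennreal"
  assumes [measurable]: "f \<in> borel_measurable borel"
  shows "(\<integral>\<^sup>+x. f (v + x) \<partial>lborel) = (\<integral>\<^sup>+x. f x \<partial>lborel)"
  by (subst (2) lborel_distr_plus[symmetric, of v]) (simp add: nn_integral_distr)

lemma integral_lborel_translate:
  fixes f :: "'a::euclidean_space \<Rightarrow> 'b::{banach, second_countable_topology}"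
  assumes [measurable]: "f \<in> borel_measurable borel"
  shows "(\<integral>x. f (v + x) \<partial>lborel) = (\<integral>x. f x \<partial>lborel)"
  by (subst (2) lborel_distr_plus[symmetric, of v]) (simp add: integral_distr)

lemma AE_lborel_reflect:
  fixes P :: "'a::euclidean_space \<Rightarrow> bool"
  assumes "AE x in lborel. P x" and [measurable]: "Measurable.pred borel P"
  shows "AE x in lborel. P (v - x)"
proof -
  have "AE x in distr lborel borel (\<lambda>x. v - x). P x"
    using assms(1) by (simp only: lborel_distr_reflect)
  then show ?thesis
    by (subst (asm) AE_distr_iff) auto
qed

lemma integrable_pair_lborel_iterated:
  fixes F :: "'a::euclidean_space \<Rightarrow> 'b::euclidean_space \<Rightarrow> 'c::{banach, second_countable_topology}"
  assumes [measurable]: "(\<lambda>(x, y). F x y) \<in> borel_measurable (lborel \<Otimes>\<^sub>M lborel)"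
    and "(\<integral>\<^sup>+x. \<integral>\<^sup>+y. norm (F x y) \<partial>lborel \<partial>lborel) < \<infinity>"
  shows "integrable (lborel \<Otimes>\<^sub>M lborel) (\<lambda>(x, y). F x y)"
  using assms(2) by (intro integrableI_bounded) (simp_all add: lborel.nn_integral_fst[symmetric])

lemma nn_integral_abs_triple_conv_finite:
  fixes G P g :: "'a::euclidean_space \<Rightarrow> real"
  assumes G: "integrable lborel G"
    and [measurable]: "P \<in> borel_measurable borel" "g \<in> borel_measurable borel"
    and bound: "\<And>v. (\<integral>\<^sup>+y. ennreal (\<bar>P y\<bar> * \<bar>g (v - y)\<bar>) \<partial>lborel) \<le> ennreal B"
  shows "(\<integral>\<^sup>+z. \<integral>\<^sup>+y. ennreal (\<bar>G z\<bar> * (\<bar>P y\<bar> * \<bar>g (x - z - y)\<bar>)) \<partial>lborel \<partial>lborel) < \<infinity>"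
proof -
  have [measurable]: "G \<in> borel_measurable borel"
    using G by auto
  have "(\<integral>\<^sup>+z. \<integral>\<^sup>+y. ennreal (\<bar>G z\<bar> * (\<bar>P y\<bar> * \<bar>g (x - z - y)\<bar>)) \<partial>lborel \<partial>lborel) =
      (\<integral>\<^sup>+z. \<bar>G z\<bar> * (\<integral>\<^sup>+y. ennreal (\<bar>P y\<bar> * \<bar>g (x - z - y)\<bar>) \<partial>lborel) \<partial>lborel)"
    by (intro nn_integral_cong) (simp add: ennreal_mult flip: nn_integral_cmult)
  also have "\<dots> \<le> (\<integral>\<^sup>+z. \<bar>G z\<bar> * ennreal B \<partial>lborel)"
    using bound by (intro nn_integral_mono mult_left_mono) auto
  also have "\<dots> = (\<integral>\<^sup>+z. \<bar>G z\<bar> \<partial>lborel) * ennreal B"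
    by (rule nn_integral_multc) measurable
  also have "\<dots> < \<infinity>"
    using G by (simp add: integrable_iff_bounded ennreal_mult_less_top)
  finally show ?thesis .
qed

lemma conv_conv_commute_assoc:
  fixes G P g :: "'a::euclidean_space \<Rightarrow> real"
  assumes G: "integrable lborel G"
    and P_measurable [measurable]: "P \<in> borel_measurable borel"
    and g_measurable [measurable]: "g \<in> borel_measurable borel"
    and bound: "\<And>v. (\<integral>\<^sup>+y. ennreal (\<bar>P y\<bar> * \<bar>g (v - y)\<bar>) \<partial>lborel) \<le> ennreal B"
  shows "conv P (conv G g) x = conv (conv G P) g x"
    and "integrable lborel (\<lambda>w. conv G P w * g (x - w))"
proof -
  have [measurable]: "G \<in> borel_measurable borel"
    using G by auto
  define \<Phi> where "\<Phi> z y = G z * (P y * g (x - z - y))" for z y :: 'a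
  define \<Psi> where "\<Psi> z w = G z * (P (w - z) * g (x - w))" for z w :: 'a
  have shift: "\<Psi> z (z + y) = \<Phi> z y" for z y
    by (simp add: \<Phi>_def \<Psi>_def algebra_simps)
  have [measurable]: "(\<lambda>(z, y). \<Phi> z y) \<in> borel_measurable (lborel \<Otimes>\<^sub>M lborel)"
    "(\<lambda>(z, w). \<Psi> z w) \<in> borel_measurable (lborel \<Otimes>\<^sub>M lborel)"
    unfolding \<Phi>_def \<Psi>_def by measurable
  have \<Phi>_finite: "(\<integral>\<^sup>+z. \<integral>\<^sup>+y. norm (\<Phi> z y) \<partial>lborel \<partial>lborel) < \<infinity>"
    using nn_integral_abs_triple_conv_finite[OF G P_measurable g_measurable bound, of x]
    by (simp add: \<Phi>_def abs_mult)
  have "(\<integral>\<^sup>+w. norm (\<Psi> z w) \<partial>lborel) = (\<integral>\<^sup>+y. norm (\<Psi> z (z + y)) \<partial>lborel)" for z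
    by (rule nn_integral_lborel_translate[symmetric]) (unfold \<Psi>_def, measurable)
  then have translate: "(\<integral>\<^sup>+w. norm (\<Psi> z w) \<partial>lborel) = (\<integral>\<^sup>+y. norm (\<Phi> z y) \<partial>lborel)" for z
    by (simp only: shift)
  have \<Psi>_finite: "(\<integral>\<^sup>+z. \<integral>\<^sup>+w. norm (\<Psi> z w) \<partial>lborel \<partial>lborel) < \<infinity>"
    by (simp only: translate \<Phi>_finite)
  have \<Phi>_integrable: "integrable (lborel \<Otimes>\<^sub>M lborel) (\<lambda>(z, y). \<Phi> z y)"
    by (rule integrable_pair_lborel_iterated[OF _ \<Phi>_finite]) measurable
  have \<Psi>_integrable: "integrable (lborel \<Otimes>\<^sub>M lborel) (\<lambda>(z, w). \<Psi> z w)"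
    by (rule integrable_pair_lborel_iterated[OF _ \<Psi>_finite]) measurable
  have outer: "(LINT z|lborel. \<Psi> z w) = conv G P w * g (x - w)" for w
    unfolding \<Psi>_def conv_def by (simp add: mult.assoc flip: integral_mult_left_zero)
  show "integrable lborel (\<lambda>w. conv G P w * g (x - w))"
    using lborel_pair.integrable_fst'[OF lborel_pair.integrable_product_swap[OF \<Psi>_integrable]]
    by (simp add: outer)
  have "conv P (conv G g) x = (LINT y|lborel. LINT z|lborel. \<Phi> z y)"
    unfolding conv_def \<Phi>_def by (simp add: algebra_simps flip: integral_mult_right_zero)
  also have "\<dots> = (LINT z|lborel. LINT y|lborel. \<Phi> z y)"
    by (rule lborel_pair.Fubini_integral[OF \<Phi>_integrable])
  also have "\<dots> = (LINT z|lborel. LINT w|lborel. \<Psi> z w)"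
  proof (rule Bochner_Integration.integral_cong[OF refl])
    fix z
    have "(LINT w|lborel. \<Psi> z w) = (LINT y|lborel. \<Psi> z (z + y))"
      by (rule integral_lborel_translate[symmetric]) (unfold \<Psi>_def, measurable)
    then show "(LINT y|lborel. \<Phi> z y) = (LINT w|lborel. \<Psi> z w)"
      by (simp only: shift)
  qed
  also have "\<dots> = (LINT w|lborel. LINT z|lborel. \<Psi> z w)"
    by (rule lborel_pair.Fubini_integral[OF \<Psi>_integrable, symmetric])
  also have "\<dots> = conv (conv G P) g x"
    by (simp add: outer conv_def)
  finally show "conv P (conv G g) x = conv (conv G P) g x" .
qed

lemma le_one_plus_powr:
  fixes x p :: real
  assumes "0 \<le> x" "1 \<le> p"
  shows "x \<le> 1 + x powr p"
proof (cases "x \<le> 1")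
  case False
  with assms have "x powr 1 \<le> x powr p"
    by (intro powr_mono) auto
  with False show ?thesis
    by simp
qed (use powr_ge_zero[of x p] in linarith)

lemma nn_integral_mult_reflect_le_Lp:
  fixes P g :: "'a::euclidean_space \<Rightarrow> real"
  assumes P: "integrable lborel P" "\<And>y. \<bar>P y\<bar> \<le> Pm"
    and [measurable]: "g \<in> borel_measurable borel"
    and p: "1 \<le> p" and g: "integrable lborel (\<lambda>y. \<bar>g y\<bar> powr p)"
  shows "(\<integral>\<^sup>+y. ennreal (\<bar>P y\<bar> * \<bar>g (v - y)\<bar>) \<partial>lborel) \<le>
    ennreal ((LINT y|lborel. \<bar>P y\<bar>) + Pm * (LINT y|lborel. \<bar>g y\<bar> powr p))"
proof -
  have [measurable]: "P \<in> borel_measurable borel"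
    using P by auto
  have Pm: "0 \<le> Pm"
    using P(2) abs_ge_zero order_trans by blast
  have "\<bar>P y\<bar> * \<bar>g (v - y)\<bar> \<le> \<bar>P y\<bar> * (1 + \<bar>g (v - y)\<bar> powr p)" for y
    using p by (intro mult_left_mono le_one_plus_powr) auto
  also have "\<bar>P y\<bar> * (1 + \<bar>g (v - y)\<bar> powr p) \<le> \<bar>P y\<bar> + Pm * \<bar>g (v - y)\<bar> powr p" for y
    using P(2)[of y] by (simp add: distrib_left mult_right_mono)
  finally have "(\<integral>\<^sup>+y. ennreal (\<bar>P y\<bar> * \<bar>g (v - y)\<bar>) \<partial>lborel) \<le>
      (\<integral>\<^sup>+y. ennreal \<bar>P y\<bar> + ennreal Pm * ennreal (\<bar>g (v - y)\<bar> powr p) \<partial>lborel)"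
    using Pm by (intro nn_integral_mono) (simp flip: ennreal_plus ennreal_mult)
  also have "\<dots> = (\<integral>\<^sup>+y. \<bar>P y\<bar> \<partial>lborel) + ennreal Pm * (\<integral>\<^sup>+y. \<bar>g (v - y)\<bar> powr p \<partial>lborel)"
    by (simp add: nn_integral_add nn_integral_cmult)
  also have "(\<integral>\<^sup>+y. \<bar>g (v - y)\<bar> powr p \<partial>lborel) = (\<integral>\<^sup>+y. \<bar>g y\<bar> powr p \<partial>lborel)"
    by (rule nn_integral_lborel_reflect[where f = "\<lambda>y. ennreal (\<bar>g y\<bar> powr p)"]) measurable
  also have "(\<integral>\<^sup>+y. \<bar>P y\<bar> \<partial>lborel) + ennreal Pm * (\<integral>\<^sup>+y. \<bar>g y\<bar> powr p \<partial>lborel) =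
      ennreal ((LINT y|lborel. \<bar>P y\<bar>) + Pm * (LINT y|lborel. \<bar>g y\<bar> powr p))"
    using P g Pm by (simp add: nn_integral_eq_integral integral_nonneg_AE ennreal_plus ennreal_mult)
  finally show ?thesis .
qed

lemma nn_integral_mult_reflect_le_Linf:
  fixes P g :: "'a::euclidean_space \<Rightarrow> real"
  assumes P: "integrable lborel P"
    and [measurable]: "g \<in> borel_measurable borel"
    and g: "AE y in lborel. \<bar>g y\<bar> \<le> M"
  shows "(\<integral>\<^sup>+y. ennreal (\<bar>P y\<bar> * \<bar>g (v - y)\<bar>) \<partial>lborel) \<le> ennreal (max M 0 * (LINT y|lborel. \<bar>P y\<bar>))"
proof -
  have "AE y in lborel. \<bar>g (v - y)\<bar> \<le> M"
    by (rule AE_lborel_reflect[OF g]) measurable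
  then have "(\<integral>\<^sup>+y. ennreal (\<bar>P y\<bar> * \<bar>g (v - y)\<bar>) \<partial>lborel) \<le> (\<integral>\<^sup>+y. ennreal (max M 0) * \<bar>P y\<bar> \<partial>lborel)"
  proof (intro nn_integral_mono_AE, eventually_elim)
    case (elim y)
    then have "\<bar>g (v - y)\<bar> \<le> max M 0"
      by simp
    then have "\<bar>P y\<bar> * \<bar>g (v - y)\<bar> \<le> max M 0 * \<bar>P y\<bar>"
      using mult_left_mono[of _ _ "\<bar>P y\<bar>"] by (metis abs_ge_zero mult.commute)
    then have "ennreal (\<bar>P y\<bar> * \<bar>g (v - y)\<bar>) \<le> ennreal (max M 0 * \<bar>P y\<bar>)"
      by (rule ennreal_leI)
    also have "\<dots> = ennreal (max M 0) * ennreal \<bar>P y\<bar>"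
      by (rule ennreal_mult) auto
    finally show ?case .
  qed
  also have "\<dots> = ennreal (max M 0 * (LINT y|lborel. \<bar>P y\<bar>))"
    using P by (simp add: nn_integral_cmult nn_integral_eq_integral ennreal_mult)
  finally show ?thesis .
qed

lemma nn_integral_mult_reflect_bounded:
  fixes P g :: "'a::euclidean_space \<Rightarrow> real"
  assumes P: "integrable lborel P" "\<And>y. \<bar>P y\<bar> \<le> Pm"
    and g_measurable: "g \<in> borel_measurable borel"
    and g_bounded: "(\<exists>p\<ge>1. integrable lborel (\<lambda>y. \<bar>g y\<bar> powr p)) \<or> (\<exists>M. AE y in lborel. \<bar>g y\<bar> \<le> M)"
  obtains B where "\<And>v. (\<integral>\<^sup>+y. ennreal (\<bar>P y\<bar> * \<bar>g (v - y)\<bar>) \<partial>lborel) \<le> ennreal B"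
  using g_bounded
proof (elim disjE exE conjE)
  fix p assume "1 \<le> p" "integrable lborel (\<lambda>y. \<bar>g y\<bar> powr p)"
  then show thesis
    by (rule that[OF nn_integral_mult_reflect_le_Lp[OF P g_measurable]])
next
  fix M assume "AE y in lborel. \<bar>g y\<bar> \<le> M"
  then show thesis
    by (rule that[OF nn_integral_mult_reflect_le_Linf[OF P(1) g_measurable]])
qed

lemma conv_conv_lower:
  fixes G P g :: "'a::euclidean_space \<Rightarrow> real"
  assumes G: "integrable lborel G" and P: "integrable lborel P" "\<And>y. \<bar>P y\<bar> \<le> Pm"
    and g_measurable [measurable]: "g \<in> borel_measurable borel" and g_nonneg: "AE y in lborel. 0 \<le> g y"
    and g_bounded: "(\<exists>p\<ge>1. integrable lborel (\<lambda>y. \<bar>g y\<bar> powr p)) \<or> (\<exists>M. AE y in lborel. \<bar>g y\<bar> \<le> M)"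
    and lower: "\<And>w. c * P w \<le> conv G P w"
  shows "c * conv P g x \<le> conv P (conv G g) x"
proof -
  have P_measurable [measurable]: "P \<in> borel_measurable borel"
    using P by auto
  obtain B where B: "\<And>v. (\<integral>\<^sup>+y. ennreal (\<bar>P y\<bar> * \<bar>g (v - y)\<bar>) \<partial>lborel) \<le> ennreal B"
    using nn_integral_mult_reflect_bounded[OF P g_measurable g_bounded] by blast
  note commute_assoc = conv_conv_commute_assoc[OF G P_measurable g_measurable B]
  have "(\<integral>\<^sup>+w. norm (P w * g (x - w)) \<partial>lborel) < \<infinity>"
    using B[of x] by (simp add: abs_mult le_less_trans)
  then have "integrable lborel (\<lambda>w. P w * g (x - w))"
    by (intro integrableI_bounded) measurable
  then have "c * conv P g x = (LINT w|lborel. c * P w * g (x - w))"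
    by (simp add: conv_def mult.assoc)
  also have "\<dots> \<le> (LINT w|lborel. conv G P w * g (x - w))"
  proof (rule integral_mono_AE)
    show "integrable lborel (\<lambda>w. c * P w * g (x - w))"
      using \<open>integrable lborel (\<lambda>w. P w * g (x - w))\<close> by (simp add: mult.assoc)
    show "integrable lborel (\<lambda>w. conv G P w * g (x - w))"
      by (rule commute_assoc(2)) measurable
    show "AE w in lborel. c * P w * g (x - w) \<le> conv G P w * g (x - w)"
    proof -
      have "AE w in lborel. 0 \<le> g (x - w)"
        by (rule AE_lborel_reflect[OF g_nonneg]) measurable
      then show ?thesis
        by eventually_elim (intro mult_right_mono lower)
    qed
  qed
  also have "\<dots> = conv P (conv G g) x"
    by (simp only: commute_assoc(1) conv_def[of "conv G P" g x])
  finally show ?thesis .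
qed

theorem lemma3p6:
  fixes \<alpha> T :: real
  assumes "0 \<le> \<alpha>" "\<alpha> < real DIM('a::euclidean_space)" "T > 0"
  shows "\<exists>C>0.
    (\<forall>(x::'a) t. 0 < t \<and> t \<le> T \<longrightarrow>
        t powr \<alpha> * poisson t x \<le> C * bessel_pot \<alpha> (poisson t) x) \<and>
    (\<forall>g :: 'a \<Rightarrow> real.
        g \<in> borel_measurable lborel \<and> (AE y in lborel. 0 \<le> g y) \<and>
        ((\<exists>p\<ge>1. integrable lborel (\<lambda>y. \<bar>g y\<bar> powr p)) \<or>
         (\<exists>M. AE y in lborel. \<bar>g y\<bar> \<le> M)) \<longrightarrow>
        (\<forall>x t. 0 < t \<and> t \<le> T \<longrightarrow>
           t powr \<alpha> * conv (poisson t) g x \<le> C * conv (poisson t) (bessel_pot \<alpha> g) x))"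
proof (cases "\<alpha> = 0")
  case True
  then show ?thesis
    by (intro exI[of _ 1]) (simp add: bessel_pot_def)
next
  case False
  with assms have \<alpha>: "0 < \<alpha>" "\<alpha> < real DIM('a)"
    by auto
  obtain C where C: "C > 0"
    and lower: "\<And>t x. 0 < t \<Longrightarrow> t \<le> T \<Longrightarrow> C * t powr \<alpha> * poisson t x \<le> conv (bessel_kernel \<alpha>) (poisson t) (x::'a)"
    using conv_bessel_kernel_poisson_lower[OF \<alpha>] by blast
  have conv_lower: "C * t powr \<alpha> * conv (poisson t) g x \<le> conv (poisson t) (conv (bessel_kernel \<alpha>) g) x"
    if t: "0 < t" "t \<le> T" and g: "g \<in> borel_measurable borel" "AE y in lborel. 0 \<le> g y"
      "(\<exists>p\<ge>1. integrable lborel (\<lambda>y. \<bar>g y\<bar> powr p)) \<or> (\<exists>M. AE y in lborel. \<bar>g y\<bar> \<le> M)"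
    for t and g :: "'a \<Rightarrow> real" and x
  proof -
    obtain Pm where "\<And>y. \<bar>poisson t (y::'a)\<bar> \<le> Pm"
      using poisson_bounded[OF t(1)] by blast
    then show ?thesis
      using \<alpha> t g lower
      by (intro conv_conv_lower bessel_kernel_spec integrable_poisson) (auto simp: mult.assoc)
  qed
  show ?thesis
    using False C lower conv_lower
    by (intro exI[of _ "1 / C"]) (auto simp: bessel_pot_def field_simps)
qed

end
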